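(* Let $f\in\mathbf{SB}_n$ be nonconstant. If $\deg(f)$ is not a power of $2$, then $\mathcal{AI}(f)<2^{\lfloor\log_2\deg(f)\rfloor}$. Consequently, every nonconstant $f\in\mathbf{SB}_n$ satisfies $\mathcal{AI}(f)\le 2^{\lfloor\log_2\deg(f)\rfloor}$.
   Context: $\mathbf{SB}_n$ is the set of symmetric Boolean functions on $n$ variables; $\deg$ is the algebraic degree. The algebraic immunity is $\mathcal{AI}(f)=\min\{\deg(g): g\neq0,\ gf=0 \text{ or } g(f+1)=0\}$. *)

theory Defs
  imports Complex_Main
begin

text \<open>A Boolean function on n variables is represented as a predicate on
  supports x \<subseteq> {..<n} (x is the set of coordinates equal to 1);
  values outside Pow {..<n} are irrelevant.\<close>

definition anf_rep :: "nat \<Rightarrow> (nat set \<Rightarrow> bool) \<Rightarrow> (nat set \<Rightarrow> bool) \<Rightarrow> bool" where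
  "anf_rep n a f \<longleftrightarrow> (\<forall>S. a S \<longrightarrow> S \<subseteq> {..<n}) \<and>
     (\<forall>x. x \<subseteq> {..<n} \<longrightarrow> f x = odd (card {S. S \<subseteq> x \<and> a S}))"

definition alg_deg :: "nat \<Rightarrow> (nat set \<Rightarrow> bool) \<Rightarrow> nat" where
  "alg_deg n f = (LEAST d. \<exists>a. anf_rep n a f \<and> (\<forall>S. a S \<longrightarrow> card S \<le> d))"

definition is_zero_fun :: "nat \<Rightarrow> (nat set \<Rightarrow> bool) \<Rightarrow> bool" where
  "is_zero_fun n g \<longleftrightarrow> (\<forall>x. x \<subseteq> {..<n} \<longrightarrow> \<not> g x)"

definition symmetric_bf :: "nat \<Rightarrow> (nat set \<Rightarrow> bool) \<Rightarrow> bool" where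
  "symmetric_bf n f \<longleftrightarrow> (\<forall>x y. x \<subseteq> {..<n} \<longrightarrow> y \<subseteq> {..<n} \<longrightarrow> card x = card y \<longrightarrow> f x = f y)"

definition nonconstant_bf :: "nat \<Rightarrow> (nat set \<Rightarrow> bool) \<Rightarrow> bool" where
  "nonconstant_bf n f \<longleftrightarrow> (\<exists>x y. x \<subseteq> {..<n} \<and> y \<subseteq> {..<n} \<and> f x \<noteq> f y)"

definition alg_immunity :: "nat \<Rightarrow> (nat set \<Rightarrow> bool) \<Rightarrow> nat" where
  "alg_immunity n f = (LEAST d. \<exists>g. \<not> is_zero_fun n g \<and>
      (is_zero_fun n (\<lambda>x. g x \<and> f x) \<or> is_zero_fun n (\<lambda>x. g x \<and> \<not> f x)) \<and>
      alg_deg n g = d)"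

end

theory Submission
  imports Defs
begin

(* Write v w = f {..<w} for the value vector of a symmetric f and N = 2^m.
   1. Binomial parity: (2^m choose j) is even for 0 < j < 2^m, and
      (w choose 2^m) is odd iff bit m of w is set (a case of Lucas' theorem).
   2. Parity Moebius inversion over subcubes yields the existence of an
      algebraic normal form and the fact that a function of degree < card Z is
      true an even number of times on every subcube with free coordinates Z.
   3. For symmetric functions, deg f < 2^k makes v 2^k-periodic, and
      conversely a 2^k-periodic v gives deg f < 2^k.
   4. With 2N-periodic v, either v (l + N) = v l for some l < N, and then the
      symmetric indicator of {card x mod N = l} is an annihilator of degree < N,
      or v flips everywhere, and then f is an N-periodic function plus the
      elementary symmetric function of degree N, so deg f <= N.
   The theorem follows by choosing m = floor (log2 (deg f)). *)

(* The binomial coefficients of a power of two are even, except at both ends: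
   2^m divides (2^m choose j) * j, and 2^m cannot divide 0 < j < 2^m. *)
lemma even_choose_pow2:
  assumes "0 < j" "j < (2::nat) ^ m"
  shows "even (2 ^ m choose j)"
proof (rule ccontr)
  assume odd: "odd (2 ^ m choose j)"
  have "2 ^ m * (2 ^ m - 1 choose (j - 1)) = (2 ^ m choose j) * j"
    using Suc_times_binomial_eq[of "2 ^ m - 1" "j - 1"] assms(1) by simp
  then have "(2::nat) ^ m dvd (2 ^ m choose j) * j"
    by (metis dvd_triv_left)
  moreover have "coprime ((2::nat) ^ m) (2 ^ m choose j)"
    using odd by simp
  ultimately have "(2::nat) ^ m dvd j"
    by (simp add: coprime_dvd_mult_right_iff)
  then show False
    using assms by (meson nat_dvd_not_less)
qed

lemma even_binomial_sum_pow2: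
  "even (\<Sum>j\<le>(2::nat) ^ m. (2 ^ m choose j) * G j) \<longleftrightarrow> even (G 0 + G (2 ^ m))"
proof -
  define N :: nat where "N = 2 ^ m"
  have "{..N} = insert 0 (insert N {1..<N})"
    by (auto simp: N_def)
  then have "(\<Sum>j\<le>N. (N choose j) * G j) = G 0 + G N + (\<Sum>j\<in>{1..<N}. (N choose j) * G j)"
    by (simp add: N_def)
  moreover have "even (\<Sum>j\<in>{1..<N}. (N choose j) * G j)"
    by (rule dvd_sum) (simp add: N_def even_choose_pow2)
  ultimately show ?thesis
    by (simp add: N_def)
qed

(* The case of Lucas' theorem needed here: (w choose 2^m) is odd iff bit m of w
   is set.  Induction on w, using Vandermonde's identity to pass from w to w + 2^m. *)
lemma odd_choose_pow2_iff: "odd (w choose 2 ^ m) \<longleftrightarrow> odd (w div 2 ^ m)"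
proof (induction w rule: less_induct)
  case (less w)
  show ?case
  proof (cases "w < 2 ^ m")
    case True
    then show ?thesis by (simp add: binomial_eq_0)
  next
    case False
    then obtain v where w: "w = v + 2 ^ m"
      by (metis add.commute le_Suc_ex not_less)
    have "(\<Sum>k\<le>2 ^ m. (2 ^ m choose k) * (v choose (2 ^ m - k))) = w choose 2 ^ m"
      using vandermonde[of "2 ^ m" v "2 ^ m"] w by (simp add: add.commute)
    then have "odd (w choose 2 ^ m) \<longleftrightarrow> even (v choose 2 ^ m)"
      using even_binomial_sum_pow2[of m "\<lambda>k. v choose (2 ^ m - k)"] by simp
    moreover have "w div 2 ^ m = Suc (v div 2 ^ m)"
      using w by simp
    ultimately show ?thesis
      using less.IH[of v] w by simp
  qed
qed

lemma binomial_sum_Suc: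
  "(\<Sum>j\<le>Suc s. (Suc s choose j) * G j)
     = (\<Sum>j\<le>s. (s choose j) * G j) + (\<Sum>j\<le>s. (s choose j) * G (Suc j))"
proof -
  have "(\<Sum>j\<le>Suc s. (Suc s choose j) * G j) = G 0 + (\<Sum>i\<le>s. (Suc s choose Suc i) * G (Suc i))"
    by (subst sum.atMost_Suc_shift) simp
  also have "\<dots> = G 0 + (\<Sum>i\<le>s. (s choose Suc i) * G (Suc i)) + (\<Sum>i\<le>s. (s choose i) * G (Suc i))"
    by (simp add: sum.distrib[symmetric] algebra_simps)
  also have "G 0 + (\<Sum>i\<le>s. (s choose Suc i) * G (Suc i)) = (\<Sum>j\<le>Suc s. (s choose j) * G j)"
    by (subst sum.atMost_Suc_shift) simp
  also have "\<dots> = (\<Sum>j\<le>s. (s choose j) * G j)"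
    by simp
  finally show ?thesis .
qed

(* Base case s = N is the end-term lemma above;
   Pascal's rule splits the sum for s + 1 into sums for u and its shift. *)
lemma even_binomial_sum_periodic:
  assumes "N = (2::nat) ^ m" "N \<le> s" "\<And>j. u j = u (j mod N)"
  shows "even (\<Sum>j\<le>s. (s choose j) * of_bool (u j) :: nat)"
  using assms(2,3)
proof (induction s arbitrary: u rule: dec_induct)
  case base
  have "u N = u 0"
    using base by (metis mod_self)
  then show ?case
    using even_binomial_sum_pow2[of m "\<lambda>j. of_bool (u j)"] assms(1) by simp
next
  case (step s)
  have "\<And>j. u (Suc j) = u (Suc (j mod N))"
    using step.prems by (metis mod_Suc_eq)
  then have "even (\<Sum>j\<le>s. (s choose j) * of_bool (u (Suc j)) :: nat)"
    using step.IH[of "\<lambda>j. u (Suc j)"] by simp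
  moreover have "even (\<Sum>j\<le>s. (s choose j) * of_bool (u j) :: nat)"
    using step.IH step.prems by blast
  ultimately show ?case
    using binomial_sum_Suc[of s "\<lambda>j. of_bool (u j)"] by simp
qed

(* Subsets of Z containing W correspond to subsets of Z - W. *)
lemma card_supersets:
  assumes "finite Z" "W \<subseteq> Z"
  shows "card {S. S \<subseteq> Z \<and> W \<subseteq> S} = 2 ^ card (Z - W)"
proof -
  have "{S. S \<subseteq> Z \<and> W \<subseteq> S} = (\<lambda>U. U \<union> W) ` Pow (Z - W)"
  proof (rule set_eqI, rule iffI)
    fix S assume "S \<in> {S. S \<subseteq> Z \<and> W \<subseteq> S}"
    then have "S = (S - W) \<union> W" "S - W \<in> Pow (Z - W)" by auto
    then show "S \<in> (\<lambda>U. U \<union> W) ` Pow (Z - W)" by blast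
  qed (use assms in auto)
  moreover have "inj_on (\<lambda>U. U \<union> W) (Pow (Z - W))"
    by (auto simp: inj_on_def)
  ultimately show ?thesis
    using assms by (simp add: card_image card_Pow)
qed

lemma card_subsets_by_size:
  assumes "finite Z"
  shows "card {S. S \<subseteq> Z \<and> P (card S)} = (\<Sum>j\<le>card Z. (card Z choose j) * of_bool (P j))"
proof -
  have "{S. S \<subseteq> Z \<and> P (card S)} = (\<Union>j\<in>{j. j \<le> card Z \<and> P j}. {S. S \<subseteq> Z \<and> card S = j})"
    using assms by (auto intro: card_mono)
  then have "card {S. S \<subseteq> Z \<and> P (card S)}
      = (\<Sum>j\<in>{j. j \<le> card Z \<and> P j}. card {S. S \<subseteq> Z \<and> card S = j})"
    using assms by (simp add: card_UN_disjoint finite_subset[of _ "Pow Z"] disjoint_iff)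
  also have "\<dots> = (\<Sum>j\<in>{j. j \<le> card Z \<and> P j}. card Z choose j)"
    using assms by (simp add: n_subsets)
  also have "\<dots> = (\<Sum>j\<in>{..card Z} \<inter> {j. P j}. card Z choose j)"
    by (rule sum.cong) auto
  also have "\<dots> = (\<Sum>j\<le>card Z. (card Z choose j) * of_bool (P j))"
    by simp
  finally show ?thesis .
qed

(* Each T
   contributes 2^card (Z - T) to the double count, which is odd only if Z \<subseteq> T. *)
lemma even_card_subcube_iff:
  assumes "finite y" "finite Z" "y \<inter> Z = {}"
  shows "even (card {S. S \<subseteq> Z \<and> odd (card {T. T \<subseteq> y \<union> S \<and> P T})})
     \<longleftrightarrow> even (card {T. T \<subseteq> y \<union> Z \<and> Z \<subseteq> T \<and> P T})"
proof -
  define U where "U = y \<union> Z"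
  have finU: "finite U"
    using assms by (simp add: U_def)
  have count: "card {T. T \<subseteq> y \<union> S \<and> P T} = (\<Sum>T\<in>Pow U. of_bool (T \<subseteq> y \<union> S \<and> P T) :: nat)"
    if "S \<subseteq> Z" for S
  proof -
    have "{T. T \<subseteq> y \<union> S \<and> P T} = Pow U \<inter> {T. T \<subseteq> y \<union> S \<and> P T}"
      using that by (auto simp: U_def)
    then show ?thesis
      using finU by simp
  qed
  have supersets: "(\<Sum>S\<in>Pow Z. of_bool (T \<subseteq> y \<union> S \<and> P T)) = (of_bool (P T) * 2 ^ card (Z - T) :: nat)"
    if "T \<subseteq> U" for T
  proof -
    have "Pow Z \<inter> {S. T \<subseteq> y \<union> S} = {S. S \<subseteq> Z \<and> T \<inter> Z \<subseteq> S}"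
      using that assms(3) by (auto simp: U_def)
    moreover have "Z - T \<inter> Z = Z - T"
      by blast
    ultimately show ?thesis
      using assms(2) card_supersets[of Z "T \<inter> Z"] by (cases "P T") simp_all
  qed
  have "even (card {S. S \<subseteq> Z \<and> odd (card {T. T \<subseteq> y \<union> S \<and> P T})})
      \<longleftrightarrow> even (\<Sum>S\<in>Pow Z. card {T. T \<subseteq> y \<union> S \<and> P T})"
    using assms(2) by (simp add: even_sum_iff Pow_def)
  also have "(\<Sum>S\<in>Pow Z. card {T. T \<subseteq> y \<union> S \<and> P T})
      = (\<Sum>S\<in>Pow Z. \<Sum>T\<in>Pow U. of_bool (T \<subseteq> y \<union> S \<and> P T))"
    by (rule sum.cong) (simp_all add: count)
  also have "\<dots> = (\<Sum>T\<in>Pow U. of_bool (P T) * 2 ^ card (Z - T))"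
    by (subst sum.swap) (simp add: supersets)
  also have "even \<dots> \<longleftrightarrow> even (card {T\<in>Pow U. P T \<and> Z \<subseteq> T})"
    using finU assms(2) by (simp add: even_sum_iff card_eq_0_iff finite_subset)
  also have "{T\<in>Pow U. P T \<and> Z \<subseteq> T} = {T. T \<subseteq> y \<union> Z \<and> Z \<subseteq> T \<and> P T}"
    by (auto simp: U_def)
  finally show ?thesis .
qed

(* The Moebius transform of g: the candidate algebraic normal form. *)
definition anf_coeff :: "nat \<Rightarrow> (nat set \<Rightarrow> bool) \<Rightarrow> nat set \<Rightarrow> bool" where
  "anf_coeff n g S \<longleftrightarrow> S \<subseteq> {..<n} \<and> odd (card {T. T \<subseteq> S \<and> g T})"

(* Every Boolean function has an algebraic normal form (the subcube lemma with y = {}). *)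
lemma anf_rep_anf_coeff: "anf_rep n (anf_coeff n g) g"
  unfolding anf_rep_def
proof (intro conjI allI impI)
  fix S assume "anf_coeff n g S"
  then show "S \<subseteq> {..<n}" by (simp add: anf_coeff_def)
next
  fix x :: "nat set" assume x: "x \<subseteq> {..<n}"
  then have "finite x"
    using finite_subset by blast
  then have "even (card {S. S \<subseteq> x \<and> odd (card {T. T \<subseteq> {} \<union> S \<and> g T})})
      \<longleftrightarrow> even (card {T. T \<subseteq> {} \<union> x \<and> x \<subseteq> T \<and> g T})"
    by (intro even_card_subcube_iff) simp_all
  moreover have "{T. T \<subseteq> {} \<union> x \<and> x \<subseteq> T \<and> g T} = (if g x then {x} else {})"
    by auto
  moreover have "{S. S \<subseteq> x \<and> anf_coeff n g S} = {S. S \<subseteq> x \<and> odd (card {T. T \<subseteq> {} \<union> S \<and> g T})}"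
    using x by (auto simp: anf_coeff_def)
  ultimately show "g x = odd (card {S. S \<subseteq> x \<and> anf_coeff n g S})"
    by auto
qed

lemma even_card_subcube_anf:
  assumes rep: "anf_rep n a f" and small: "\<And>S. a S \<Longrightarrow> card S < card Z"
    and "finite Z" "y \<inter> Z = {}" "y \<union> Z \<subseteq> {..<n}"
  shows "even (card {S. S \<subseteq> Z \<and> f (y \<union> S)})"
proof -
  have "finite y"
    using assms(5) finite_subset by blast
  then have "even (card {S. S \<subseteq> Z \<and> odd (card {T. T \<subseteq> y \<union> S \<and> a T})})
      \<longleftrightarrow> even (card {T. T \<subseteq> y \<union> Z \<and> Z \<subseteq> T \<and> a T})"
    using assms(3,4) by (rule even_card_subcube_iff)
  moreover have "{T. T \<subseteq> y \<union> Z \<and> Z \<subseteq> T \<and> a T} = {}"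
  proof -
    have "\<not> (Z \<subseteq> T \<and> a T)" if "T \<subseteq> y \<union> Z" for T
      using small[of T] card_mono[of T Z] finite_subset[OF that] assms(3) \<open>finite y\<close>
      by auto
    then show ?thesis by blast
  qed
  moreover have "{S. S \<subseteq> Z \<and> f (y \<union> S)} = {S. S \<subseteq> Z \<and> odd (card {T. T \<subseteq> y \<union> S \<and> a T})}"
    using rep assms(5) by (auto simp: anf_rep_def)
  ultimately show ?thesis
    by simp
qed

lemma alg_deg_le:
  "anf_rep n a f \<Longrightarrow> (\<And>S. a S \<Longrightarrow> card S \<le> D) \<Longrightarrow> alg_deg n f \<le> D"
  unfolding alg_deg_def by (rule Least_le) blast

lemma alg_deg_anf:
  obtains a where "anf_rep n a f" "\<And>S. a S \<Longrightarrow> card S \<le> alg_deg n f"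
proof -
  have "\<exists>a. anf_rep n a f \<and> (\<forall>S. a S \<longrightarrow> card S \<le> n)"
    using anf_rep_anf_coeff[of n f] card_mono[of "{..<n}"]
    by (metis anf_coeff_def card_lessThan finite_lessThan)
  then have "\<exists>a. anf_rep n a f \<and> (\<forall>S. a S \<longrightarrow> card S \<le> alg_deg n f)"
    unfolding alg_deg_def by (rule LeastI_ex[of "\<lambda>d. \<exists>a. anf_rep n a f \<and> (\<forall>S. a S \<longrightarrow> card S \<le> d)", OF exI])
  then show ?thesis
    using that by blast
qed

(* A degree-0 function is constant. *)
lemma alg_deg_pos:
  assumes "nonconstant_bf n f"
  shows "1 \<le> alg_deg n f"
proof (rule ccontr)
  assume "\<not> 1 \<le> alg_deg n f"
  then have deg0: "alg_deg n f = 0"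
    by simp
  obtain a where rep: "anf_rep n a f" and deg: "\<And>S. a S \<Longrightarrow> card S \<le> alg_deg n f"
    using alg_deg_anf[of n f] by blast
  have only_empty: "a S \<Longrightarrow> S = {}" for S
    using deg[of S] deg0 rep finite_subset[of S "{..<n}"] by (auto simp: anf_rep_def)
  have "f x = a {}" if "x \<subseteq> {..<n}" for x
  proof -
    have "{S. S \<subseteq> x \<and> a S} = (if a {} then {{}} else {})"
      using only_empty by auto
    then show ?thesis
      using rep that by (auto simp: anf_rep_def)
  qed
  then show False
    using assms by (auto simp: nonconstant_bf_def)
qed

(* Adding the constant 1 toggles the coefficient of the empty monomial only. *)
lemma alg_deg_complement: "alg_deg n (\<lambda>x. \<not> f x) \<le> alg_deg n f"
proof -
  obtain a where rep: "anf_rep n a f" and deg: "\<And>S. a S \<Longrightarrow> card S \<le> alg_deg n f"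
    using alg_deg_anf by blast
  define a' where "a' S = (if S = {} then \<not> a {} else a S)" for S
  have deg': "card S \<le> alg_deg n f" if "a' S" for S
    using that deg[of S] by (cases "S = {}") (auto simp: a'_def)
  have "anf_rep n a' (\<lambda>x. \<not> f x)"
    unfolding anf_rep_def
  proof (intro conjI allI impI)
    fix S assume "a' S"
    then show "S \<subseteq> {..<n}"
      using rep by (auto simp: a'_def anf_rep_def split: if_splits)
  next
    fix x :: "nat set" assume x: "x \<subseteq> {..<n}"
    have fin: "finite {S. S \<subseteq> x \<and> a S}"
      using x finite_subset[of x "{..<n}"] by simp
    have fx: "f x = odd (card {S. S \<subseteq> x \<and> a S})"
      using rep x by (simp add: anf_rep_def)
    show "(\<not> f x) = odd (card {S. S \<subseteq> x \<and> a' S})"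
    proof (cases "a {}")
      case True
      then have "{S. S \<subseteq> x \<and> a' S} = {S. S \<subseteq> x \<and> a S} - {{}}"
        and "{} \<in> {S. S \<subseteq> x \<and> a S}"
        by (auto simp: a'_def)
      moreover from this(2) fin have "card {S. S \<subseteq> x \<and> a S} > 0"
        by (auto simp: card_gt_0_iff)
      ultimately show ?thesis
        using fx fin \<open>a {}\<close> by (simp add: card_Diff_singleton) blast
    next
      case False
      then have "{S. S \<subseteq> x \<and> a' S} = insert {} {S. S \<subseteq> x \<and> a S}"
        and "{} \<notin> {S. S \<subseteq> x \<and> a S}"
        by (auto simp: a'_def)
      then show ?thesis
        using fx fin by simp
    qed
  qed
  then show ?thesis
    by (rule alg_deg_le[OF _ deg'])
qed

lemma alg_immunity_le_annihilator:
  assumes "\<not> is_zero_fun n g"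
    and "is_zero_fun n (\<lambda>x. g x \<and> f x) \<or> is_zero_fun n (\<lambda>x. g x \<and> \<not> f x)"
  shows "alg_immunity n f \<le> alg_deg n g"
  unfolding alg_immunity_def by (rule Least_le) (use assms in blast)

(* f + 1 annihilates f, so AI(f) <= deg(f + 1) <= deg(f). *)
lemma alg_immunity_le_deg:
  assumes "nonconstant_bf n f"
  shows "alg_immunity n f \<le> alg_deg n f"
proof -
  have "\<not> is_zero_fun n (\<lambda>x. \<not> f x)"
    using assms unfolding is_zero_fun_def nonconstant_bf_def by blast
  moreover have "is_zero_fun n (\<lambda>x. \<not> f x \<and> f x)"
    by (simp add: is_zero_fun_def)
  ultimately have "alg_immunity n f \<le> alg_deg n (\<lambda>x. \<not> f x)"
    by (intro alg_immunity_le_annihilator) simp_all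
  then show ?thesis
    using alg_deg_complement[of n f] by simp
qed

lemma symmetric_bf_card:
  assumes "symmetric_bf n f" "x \<subseteq> {..<n}"
  shows "f x = f {..<card x}"
proof -
  have "card x \<le> n"
    using assms(2) card_mono[of "{..<n}" x] by simp
  then show ?thesis
    using assms unfolding symmetric_bf_def by (metis card_lessThan lessThan_subset_iff)
qed

(* A symmetric function whose value vector has period 2^m has degree < 2^m: an
   ANF coefficient of size s >= 2^m is an even binomial-weighted sum, hence 0. *)
lemma alg_deg_symmetric_periodic:
  assumes N: "N = (2::nat) ^ m" and periodic: "\<And>j. u j = u (j mod N)"
  shows "alg_deg n (\<lambda>x. u (card x)) < N"
proof -
  have small: "card S \<le> N - 1" if S: "anf_coeff n (\<lambda>x. u (card x)) S" for S
  proof (rule ccontr)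
    assume "\<not> card S \<le> N - 1"
    then have "N \<le> card S"
      using N by simp
    moreover have "finite S"
      using S finite_subset by (auto simp: anf_coeff_def)
    ultimately have "even (card {T. T \<subseteq> S \<and> u (card T)})"
      using even_binomial_sum_periodic[of N m "card S" u] N periodic
      by (simp add: card_subsets_by_size)
    then show False
      using S by (simp add: anf_coeff_def)
  qed
  have "alg_deg n (\<lambda>x. u (card x)) \<le> N - 1"
    by (rule alg_deg_le[OF anf_rep_anf_coeff small])
  moreover have "0 < N"
    using N by simp
  ultimately show ?thesis
    by linarith
qed

(* Conversely, if deg f < 2^k then the value vector of a symmetric f has period 2^k:
   on the subcube {..<w} \<union> S, S \<subseteq> {w..<w + 2^k}, f is true an even number of
   times, and modulo 2 this count is v w + v (w + 2^k). *)
lemma symmetric_value_periodic: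
  assumes sym: "symmetric_bf n f" and deg: "alg_deg n f < 2 ^ k" and "w \<le> n"
  shows "f {..<w} = f {..<w mod 2 ^ k}"
proof -
  define M :: nat where "M = 2 ^ k"
  obtain a where rep: "anf_rep n a f" and deg_a: "\<And>S. a S \<Longrightarrow> card S \<le> alg_deg n f"
    using alg_deg_anf[of n f] by blast
  have shift: "f {..<w} = f {..<w + M}" if w: "w + M \<le> n" for w
  proof -
    define Z where "Z = {w..<w + M}"
    have card_Z: "card Z = M"
      by (simp add: Z_def)
    have "card S < card Z" if "a S" for S
      using deg_a[OF that] deg card_Z by (simp add: M_def)
    then have "even (card {S. S \<subseteq> Z \<and> f ({..<w} \<union> S)})"
      by (rule even_card_subcube_anf[OF rep]) (use w in \<open>auto simp: Z_def\<close>)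
    moreover have "{S. S \<subseteq> Z \<and> f ({..<w} \<union> S)} = {S. S \<subseteq> Z \<and> f {..<w + card S}}"
    proof (intro Collect_cong conj_cong refl)
      fix S assume S: "S \<subseteq> Z"
      have "card ({..<w} \<union> S) = w + card S"
        using S by (subst card_Un_disjoint) (auto simp: Z_def intro: finite_subset)
      moreover have "{..<w} \<union> S \<subseteq> {..<n}"
        using S w by (auto simp: Z_def)
      ultimately show "f ({..<w} \<union> S) = f {..<w + card S}"
        using symmetric_bf_card[OF sym] by metis
    qed
    ultimately have "even (\<Sum>j\<le>2 ^ k. (2 ^ k choose j) * of_bool (f {..<w + j}) :: nat)"
      using card_subsets_by_size[of Z "\<lambda>j. f {..<w + j}"] card_Z by (simp add: Z_def M_def)
    then have "even (of_bool (f {..<w}) + of_bool (f {..<w + 2 ^ k}) :: nat)"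
      by (simp only: even_binomial_sum_pow2 add_0_right)
    then show ?thesis
      by (cases "f {..<w}") (auto simp: M_def)
  qed
  show ?thesis
    using \<open>w \<le> n\<close>
  proof (induction w rule: less_induct)
    case (less w)
    show ?case
    proof (cases "w < M")
      case True
      then show ?thesis by (simp add: M_def)
    next
      case False
      then obtain v where v: "w = v + M"
        by (metis add.commute le_Suc_ex not_less)
      then have "f {..<v} = f {..<v mod M}"
        using less.IH[of v] less.prems by (simp add: M_def)
      then show ?thesis
        using shift[of v] v less.prems by (simp add: M_def)
    qed
  qed
qed

(* If v agrees at some l < N and l + N (or l + N
   is out of range), then g = [card x mod N = l] is a nonzero symmetric function of
   degree < N on whose support f is constant, so it annihilates f or f + 1. *)
lemma alg_immunity_lt_if_agreement:
  assumes sym: "symmetric_bf n f" and N: "N = (2::nat) ^ m"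
    and periodic: "\<And>w. w \<le> n \<Longrightarrow> f {..<w} = f {..<w mod (2 * N)}"
    and l: "l < N" "l \<le> n" and agree: "l + N \<le> n \<Longrightarrow> f {..<l + N} = f {..<l}"
  shows "alg_immunity n f < N"
proof -
  define g where "g x \<longleftrightarrow> card x mod N = l" for x :: "nat set"
  have deg_g: "alg_deg n g < N"
    unfolding g_def by (rule alg_deg_symmetric_periodic[OF N]) simp
  have nonzero: "\<not> is_zero_fun n g"
    using l by (auto simp: is_zero_fun_def g_def intro!: exI[of _ "{..<l}"])
  have constant_on_g: "f x = f {..<l}" if x: "x \<subseteq> {..<n}" "g x" for x
  proof -
    define w where "w = card x"
    have "w \<le> n"
      using x card_mono[of "{..<n}" x] by (simp add: w_def)
    moreover have "w mod N = l"
      using x by (simp add: g_def w_def)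
    ultimately consider "w mod (2 * N) = l" | "w mod (2 * N) = l + N" "l + N \<le> n"
      using mod_double_nat[of w N] mod_less_eq_dividend[of w "2 * N"] by fastforce
    then have "f {..<w} = f {..<l}"
      using periodic[OF \<open>w \<le> n\<close>] agree by cases auto
    then show ?thesis
      using symmetric_bf_card[OF sym x(1)] by (simp add: w_def)
  qed
  have "is_zero_fun n (\<lambda>x. g x \<and> f x) \<or> is_zero_fun n (\<lambda>x. g x \<and> \<not> f x)"
    using constant_on_g by (cases "f {..<l}") (auto simp: is_zero_fun_def)
  then show ?thesis
    using alg_immunity_le_annihilator[OF nonzero] deg_g by (meson le_less_trans)
qed

(* Adding the elementary symmetric function of degree N (whose value at x is the
   parity of card x choose N) to a function of degree < N gives degree <= N. *)
lemma alg_deg_add_elementary_symmetric: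
  assumes rep: "anf_rep n b h" and small: "\<And>S. b S \<Longrightarrow> card S < N"
    and twist: "\<And>x. x \<subseteq> {..<n} \<Longrightarrow> f x = (h x \<noteq> odd (card x choose N))"
  shows "alg_deg n f \<le> N"
proof -
  define a where "a S \<longleftrightarrow> b S \<or> (S \<subseteq> {..<n} \<and> card S = N)" for S
  have "anf_rep n a f"
    unfolding anf_rep_def
  proof (intro conjI allI impI)
    fix S assume "a S"
    then show "S \<subseteq> {..<n}"
      using rep by (auto simp: a_def anf_rep_def)
  next
    fix x :: "nat set" assume x: "x \<subseteq> {..<n}"
    have "finite x"
      using x finite_subset by blast
    have "{S. S \<subseteq> x \<and> a S} = {S. S \<subseteq> x \<and> b S} \<union> {S. S \<subseteq> x \<and> card S = N}"
      using x by (auto simp: a_def)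
    moreover have "{S. S \<subseteq> x \<and> b S} \<inter> {S. S \<subseteq> x \<and> card S = N} = {}"
      using small by fastforce
    ultimately have "card {S. S \<subseteq> x \<and> a S} = card {S. S \<subseteq> x \<and> b S} + (card x choose N)"
      using \<open>finite x\<close> by (simp add: card_Un_disjoint n_subsets)
    moreover have "h x = odd (card {S. S \<subseteq> x \<and> b S})"
      using rep x by (simp add: anf_rep_def)
    ultimately show "f x = odd (card {S. S \<subseteq> x \<and> a S})"
      using twist[OF x] by auto
  qed
  then show ?thesis
    by (rule alg_deg_le) (use small in \<open>fastforce simp: a_def\<close>)
qed

(* Otherwise v flips between every l < N and l + N, so by Lucas v w is
   v (w mod N) + bit m of w, i.e. f is a function of period N plus the elementary
   symmetric function of degree N; hence deg f <= N. *)
lemma alg_deg_le_if_flipping: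
  assumes sym: "symmetric_bf n f" and N: "N = (2::nat) ^ m"
    and periodic: "\<And>w. w \<le> n \<Longrightarrow> f {..<w} = f {..<w mod (2 * N)}"
    and flip: "\<And>l. l < N \<Longrightarrow> l \<le> n \<Longrightarrow> l + N \<le> n \<and> f {..<l + N} \<noteq> f {..<l}"
  shows "alg_deg n f \<le> N"
proof -
  define h where "h x \<longleftrightarrow> f {..<card x mod N}" for x :: "nat set"
  have "alg_deg n h < N"
    unfolding h_def by (rule alg_deg_symmetric_periodic[OF N]) simp
  then obtain b where rep: "anf_rep n b h" and small: "\<And>S. b S \<Longrightarrow> card S < N"
    using alg_deg_anf[of n h] by (metis le_less_trans)
  have value_twist: "f {..<w} = (f {..<w mod N} \<noteq> odd (w choose N))" if "w \<le> n" for w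
  proof -
    have split: "w mod (2 * N) = w mod N + N * (w div N mod 2)"
      using mod_mult2_eq[of w N 2] by (simp add: mult.commute)
    have "w mod N < N" "w mod N \<le> n"
      using N that by (simp, meson le_trans mod_less_eq_dividend)
    have choose: "odd (w choose N) \<longleftrightarrow> odd (w div N)"
      using odd_choose_pow2_iff[of w m] N by simp
    show ?thesis
    proof (cases "even (w div N)")
      case True
      then have "w mod (2 * N) = w mod N"
        using split by simp
      then show ?thesis
        using periodic[OF that] choose True by simp
    next
      case False
      then have "w mod (2 * N) = w mod N + N"
        using split by (simp add: odd_iff_mod_2_eq_one)
      then show ?thesis
        using periodic[OF that] choose False flip[of "w mod N"] \<open>w mod N < N\<close> \<open>w mod N \<le> n\<close>
        by simp
    qed
  qed
  show ?thesis
  proof (rule alg_deg_add_elementary_symmetric[OF rep small])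
    fix x assume x: "x \<subseteq> {..<n}"
    have "card x \<le> n"
      using x card_mono[of "{..<n}" x] by simp
    then show "f x = (h x \<noteq> odd (card x choose N))"
      using value_twist symmetric_bf_card[OF sym x] by (simp add: h_def)
  qed
qed

(* The main case: 2^m < deg f < 2^(m+1) forces AI(f) < 2^m, because the second
   alternative above would give deg f <= 2^m. *)
lemma alg_immunity_lt_pow2:
  assumes sym: "symmetric_bf n f"
    and lower: "2 ^ m < alg_deg n f" and upper: "alg_deg n f < 2 ^ Suc m"
  shows "alg_immunity n f < 2 ^ m"
proof -
  define N :: nat where "N = 2 ^ m"
  have periodic: "f {..<w} = f {..<w mod (2 * N)}" if "w \<le> n" for w
    using symmetric_value_periodic[OF sym upper that] by (simp add: N_def)
  show ?thesis
  proof (cases "\<exists>l<N. l \<le> n \<and> (l + N \<le> n \<longrightarrow> f {..<l + N} = f {..<l})")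
    case True
    then obtain l where l: "l < N" "l \<le> n" "l + N \<le> n \<Longrightarrow> f {..<l + N} = f {..<l}"
      by blast
    have "alg_immunity n f < N"
      by (rule alg_immunity_lt_if_agreement[of n f N m, OF sym N_def periodic l])
    then show ?thesis
      by (simp add: N_def)
  next
    case False
    then have flip: "\<And>l. l < N \<Longrightarrow> l \<le> n \<Longrightarrow> l + N \<le> n \<and> f {..<l + N} \<noteq> f {..<l}"
      by blast
    have "alg_deg n f \<le> N"
      by (rule alg_deg_le_if_flipping[of n f N m, OF sym N_def periodic flip])
    then show ?thesis
      using lower by (simp add: N_def)
  qed
qed

(* With m = floor (log2 (deg f)): if deg f is not a power of two then
   2^m < deg f < 2^(m+1) and AI(f) < 2^m; otherwise AI(f) <= deg f = 2^m. *)
theorem proposition1: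
  fixes n :: nat and f :: "nat set \<Rightarrow> bool"
  assumes "symmetric_bf n f" and "nonconstant_bf n f"
  shows "((\<nexists>k. alg_deg n f = 2 ^ k) \<longrightarrow>
            alg_immunity n f < 2 ^ nat \<lfloor>log 2 (real (alg_deg n f))\<rfloor>)
         \<and> alg_immunity n f \<le> 2 ^ nat \<lfloor>log 2 (real (alg_deg n f))\<rfloor>"
proof -
  define d where "d = alg_deg n f"
  obtain m where m: "2 ^ m \<le> d" "d < 2 ^ Suc m"
    using ex_power_ivl1[of 2 d] alg_deg_pos[OF assms(2)] by (auto simp: d_def)
  have floor_log: "nat \<lfloor>log 2 (real d)\<rfloor> = m"
    using floor_log_nat_eq_if[of 2 m d] m by simp
  have strict: "alg_immunity n f < 2 ^ m" if "d \<noteq> 2 ^ m"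
    using alg_immunity_lt_pow2[OF assms(1)] m that by (simp add: d_def)
  have "alg_immunity n f \<le> 2 ^ m"
    using strict alg_immunity_le_deg[OF assms(2)] by (cases "d = 2 ^ m") (auto simp: d_def)
  then show ?thesis
    using strict floor_log by (auto simp: d_def)
qed

end
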